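(* Let $\mathfrak{n}$ be a complex $4$-dimensional nilpotent algebra of nil-index $3$. Then $\mathfrak{n}$ is a $2$-step nilpotent algebra, or $\mathfrak{n}$ is isomorphic to one of the following algebras, each given on a basis $e_1,\dots,e_4$ (all products of basis elements not listed are zero; $\alpha\in\mathbb{C}$): \begin{itemize} \item $\mathfrak{L}_{01}$: $e_1e_2=e_3,\ e_1e_3=e_4,\ e_2e_1=-e_3,\ e_3e_1=-e_4$; \item $\mathfrak{L}_{09}$: $e_1e_2=-e_3+e_4,\ e_1e_3=-e_4,\ e_2e_1=e_3,\ e_3e_1=e_4$; \item $\mathfrak{L}_{10}$: $e_1e_2=-e_3,\ e_1e_3=-e_4,\ e_2e_1=e_3,\ e_2e_2=e_4,\ e_3e_1=e_4$; \item $\mathfrak{L}_{11}$: $e_1e_1=e_4,\ e_1e_2=-e_3,\ e_1e_3=-e_4,\ e_2e_1=e_3,\ e_2e_2=e_4,\ e_3e_1=e_4$; \item $\mathfrak{L}_{12}$: $e_1e_1=e_4,\ e_1e_2=-e_3,\ e_1e_3=-e_4,\ e_2e_1=e_3,\ e_3e_1=e_4$; \item $\mathbb{M}_{03}^{\alpha}$: $e_1e_2=e_3,\ e_1e_3=\alpha e_4,\ e_2e_1=-e_3,\ e_3e_1=(1-\alpha)e_4$; \item $\mathbb{M}_{04}^{\alpha}$: $e_1e_2=e_3,\ e_1e_3=\alpha e_4,\ e_2e_1=-e_3,\ e_2e_2=e_4,\ e_3e_1=(1-\alpha)e_4$; \item $\mathbb{M}_{05}$: $e_1e_2=e_3,\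 e_2e_1=-e_3,\ e_2e_3=e_4,\ e_3e_1=e_4,\ e_3e_2=-e_4$; \item $\mathbb{M}_{06}$: $e_1e_2=e_3,\ e_2e_1=-e_3,\ e_2e_2=e_4,\ e_2e_3=e_4,\ e_3e_1=e_4,\ e_3e_2=-e_4$; \item $\mathbb{M}_{07}$: $e_1e_2=e_3,\ e_2e_1=-e_3,\ e_3e_3=e_4$; \item $\mathbb{M}_{08}$: $e_1e_2=e_3+e_4,\ e_2e_1=-e_3,\ e_3e_3=e_4$; \item $\mathbb{M}_{09}$: $e_1e_1=e_4,\ e_1e_2=e_3,\ e_2e_1=-e_3,\ e_3e_3=e_4$; \item $\mathbb{M}_{10}^{\alpha}$: $e_1e_1=\alpha e_4,\ e_1e_2=e_3,\ e_1e_3=e_4,\ e_2e_1=-e_3,\ e_3e_1=-e_4,\ e_3e_3=e_4$; \item $\mathbb{M}_{11}$: $e_1e_2=e_3+e_4,\ e_1e_3=e_4,\ e_2e_1=-e_3,\ e_3e_1=-e_4,\ e_3e_3=e_4$; \item $\mathbb{M}_{12}^{\alpha}$: $e_1e_1=\alpha e_4,\ e_1e_2=e_3,\ e_1e_3=e_4,\ e_2e_1=-e_3,\ e_2e_2=e_4,\ e_3e_1=-e_4,\ e_3e_3=e_4$. \end{itemize}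
   Context: All algebras are over $\mathbb{C}$ and not necessarily associative. An algebra is of nil-index $3$ (a nil-algebra of nil-index $3$) if it satisfies $(xx)x=0$ and $x(xx)=0$ for all $x$. An algebra $A$ is nilpotent if there is $n$ such that every product of $n$ elements of $A$, with any arrangement of brackets, is zero; it is $2$-step nilpotent if $(AA)A=A(AA)=0$. *)

theory Defs
  imports "HOL-Analysis.Analysis"
begin

text \<open>A complex 4-dimensional algebra is modelled (after choosing a basis) as a
  complex-bilinear multiplication on the coordinate space complex^4.\<close>

type_synonym V4 = "complex ^ 4"

definition cbilinear :: "(V4 \<Rightarrow> V4 \<Rightarrow> V4) \<Rightarrow> bool" where
  "cbilinear m \<longleftrightarrow>
     (\<forall>a x y z. m (a *s x + y) z = a *s m x z + m y z \<and>
                m z (a *s x + y) = a *s m z x + m z y)"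

inductive prods :: "(V4 \<Rightarrow> V4 \<Rightarrow> V4) \<Rightarrow> nat \<Rightarrow> V4 \<Rightarrow> bool" for m where
  single: "prods m 1 x"
| mult: "prods m a x \<Longrightarrow> prods m b y \<Longrightarrow> prods m (a + b) (m x y)"

definition nilpotent_alg :: "(V4 \<Rightarrow> V4 \<Rightarrow> V4) \<Rightarrow> bool" where
  "nilpotent_alg m \<longleftrightarrow> (\<exists>n\<ge>1. \<forall>v. prods m n v \<longrightarrow> v = 0)"

definition nil_index3 :: "(V4 \<Rightarrow> V4 \<Rightarrow> V4) \<Rightarrow> bool" where
  "nil_index3 m \<longleftrightarrow> (\<forall>x. m (m x x) x = 0 \<and> m x (m x x) = 0)"

definition two_step_nilpotent :: "(V4 \<Rightarrow> V4 \<Rightarrow> V4) \<Rightarrow> bool" where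
  "two_step_nilpotent m \<longleftrightarrow> (\<forall>x y z. m (m x y) z = 0 \<and> m x (m y z) = 0)"

definition alg_iso :: "(V4 \<Rightarrow> V4 \<Rightarrow> V4) \<Rightarrow> (V4 \<Rightarrow> V4 \<Rightarrow> V4) \<Rightarrow> bool" where
  "alg_iso m m' \<longleftrightarrow>
     (\<exists>f. bij f \<and> (\<forall>a x y. f (a *s x + y) = a *s f x + f y) \<and>
          (\<forall>x y. f (m x y) = m' (f x) (f y)))"

definition e :: "4 \<Rightarrow> V4" where "e k = axis k 1"

text \<open>Multiplication table given as a list of entries (i, j, e_i e_j); unlisted
  products of basis vectors are zero.\<close>
definition tbl :: "(4 \<times> 4 \<times> V4) list \<Rightarrow> 4 \<Rightarrow> 4 \<Rightarrow> V4" where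
  "tbl L i j = sum_list [v. (a, b, v) \<leftarrow> L, a = i \<and> b = j]"

definition tbl_mult :: "(4 \<Rightarrow> 4 \<Rightarrow> V4) \<Rightarrow> V4 \<Rightarrow> V4 \<Rightarrow> V4" where
  "tbl_mult T x y = (\<Sum>i\<in>UNIV. \<Sum>j\<in>UNIV. (x $ i * y $ j) *s T i j)"

definition L01 where "L01 = tbl_mult (tbl [(1,2,e 3), (1,3,e 4), (2,1,-e 3), (3,1,-e 4)])"
definition L09 where "L09 = tbl_mult (tbl [(1,2,-e 3 + e 4), (1,3,-e 4), (2,1,e 3), (3,1,e 4)])"
definition L10 where "L10 = tbl_mult (tbl [(1,2,-e 3), (1,3,-e 4), (2,1,e 3), (2,2,e 4), (3,1,e 4)])"
definition L11 where "L11 = tbl_mult (tbl [(1,1,e 4), (1,2,-e 3), (1,3,-e 4), (2,1,e 3), (2,2,e 4), (3,1,e 4)])"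
definition L12 where "L12 = tbl_mult (tbl [(1,1,e 4), (1,2,-e 3), (1,3,-e 4), (2,1,e 3), (3,1,e 4)])"
definition M03 where "M03 \<alpha> = tbl_mult (tbl [(1,2,e 3), (1,3,\<alpha> *s e 4), (2,1,-e 3), (3,1,(1-\<alpha>) *s e 4)])"
definition M04 where "M04 \<alpha> = tbl_mult (tbl [(1,2,e 3), (1,3,\<alpha> *s e 4), (2,1,-e 3), (2,2,e 4), (3,1,(1-\<alpha>) *s e 4)])"
definition M05 where "M05 = tbl_mult (tbl [(1,2,e 3), (2,1,-e 3), (2,3,e 4), (3,1,e 4), (3,2,-e 4)])"
definition M06 where "M06 = tbl_mult (tbl [(1,2,e 3), (2,1,-e 3), (2,2,e 4), (2,3,e 4), (3,1,e 4), (3,2,-e 4)])"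
definition M07 where "M07 = tbl_mult (tbl [(1,2,e 3), (2,1,-e 3), (3,3,e 4)])"
definition M08 where "M08 = tbl_mult (tbl [(1,2,e 3 + e 4), (2,1,-e 3), (3,3,e 4)])"
definition M09 where "M09 = tbl_mult (tbl [(1,1,e 4), (1,2,e 3), (2,1,-e 3), (3,3,e 4)])"
definition M10 where "M10 \<alpha> = tbl_mult (tbl [(1,1,\<alpha> *s e 4), (1,2,e 3), (1,3,e 4), (2,1,-e 3), (3,1,-e 4), (3,3,e 4)])"
definition M11 where "M11 = tbl_mult (tbl [(1,2,e 3 + e 4), (1,3,e 4), (2,1,-e 3), (3,1,-e 4), (3,3,e 4)])"
definition M12 where "M12 \<alpha> = tbl_mult (tbl [(1,1,\<alpha> *s e 4), (1,2,e 3), (1,3,e 4), (2,1,-e 3), (2,2,e 4), (3,1,-e 4), (3,3,e 4)])"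

end

theory Submission
  imports Defs
begin

text \<open>
  Let \<open>A\<^sup>1 = A\<close> and let \<open>A\<^sup>k\<^sup>+\<^sup>1\<close> be spanned by the products of \<open>A\<^sup>k\<close> with \<open>A\<close> on either side.
  Nilpotency makes this chain strictly decreasing down to \<open>0\<close>, and \<open>A\<^sup>3 \<noteq> 0\<close> unless the
  algebra is 2-step nilpotent. Nil-index 3 excludes \<open>dim A\<^sup>2 = 3\<close>: then \<open>A = \<langle>x\<rangle> + A\<^sup>2\<close>, hence
  \<open>A\<^sup>2 = \<langle>xx\<rangle> + A\<^sup>3\<close>, and since \<open>x(xx) = (xx)x = (xx)(xx) = 0\<close> this gives \<open>A\<^sup>3 = A\<^sup>4\<close>.
  So the chain has dimensions 4, 2, 1, 0, and in a basis \<open>e\<^sub>1, \<dots>, e\<^sub>4\<close> adapted to it the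
  products of \<open>e\<^sub>1, e\<^sub>2\<close> lie in \<open>\<langle>e\<^sub>3, e\<^sub>4\<rangle>\<close>, the products with \<open>e\<^sub>3\<close> in \<open>\<langle>e\<^sub>4\<rangle>\<close>, and \<open>e\<^sub>4\<close> is
  annihilating. Evaluating \<open>(xx)x\<close> and \<open>x(xx)\<close> on \<open>x \<in> \<langle>e\<^sub>1, e\<^sub>2, e\<^sub>3\<rangle>\<close> shows that the
  \<open>e\<^sub>3\<close>-components form an alternating form \<open>e\<^sub>1e\<^sub>2 = -e\<^sub>2e\<^sub>1 = w e\<^sub>3\<close>. What remains is a
  bilinear form on \<open>\<langle>e\<^sub>1, e\<^sub>2, e\<^sub>3\<rangle>\<close> with values in \<open>\<langle>e\<^sub>4\<rangle>\<close>, which is normalised by linear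
  changes of \<open>e\<^sub>1, e\<^sub>2\<close> (rescaling \<open>e\<^sub>3, e\<^sub>4\<close> accordingly) and by the unipotent changes
  \<open>e\<^sub>i \<mapsto> e\<^sub>i + p\<^sub>i e\<^sub>3\<close>, \<open>e\<^sub>3 \<mapsto> e\<^sub>3 + l e\<^sub>4\<close>. The cases are: \<open>e\<^sub>3e\<^sub>3 \<noteq> 0\<close>; otherwise the matrix of
  \<open>e\<^sub>ie\<^sub>3, e\<^sub>3e\<^sub>i\<close> is invertible, or singular but not antisymmetric, or antisymmetric.
\<close>

lemma cbilinear_llin: "cbilinear m \<Longrightarrow> m (a *s x + y) z = a *s m x z + m y z"
  unfolding cbilinear_def by blast

lemma cbilinear_rlin: "cbilinear m \<Longrightarrow> m z (a *s x + y) = a *s m z x + m z y"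
  unfolding cbilinear_def by blast

lemma cbilinear_lzero: "cbilinear m \<Longrightarrow> m 0 z = 0"
  using cbilinear_llin[of m 1 0 0 z] by simp

lemma cbilinear_rzero: "cbilinear m \<Longrightarrow> m z 0 = 0"
  using cbilinear_rlin[of m z 1 0 0] by simp

lemma cbilinear_ladd: "cbilinear m \<Longrightarrow> m (x + y) z = m x z + m y z"
  using cbilinear_llin[of m 1 x y z] by simp

lemma cbilinear_radd: "cbilinear m \<Longrightarrow> m z (x + y) = m z x + m z y"
  using cbilinear_rlin[of m z 1 x y] by simp

lemma cbilinear_lscale: "cbilinear m \<Longrightarrow> m (a *s x) z = a *s m x z"
  using cbilinear_llin[of m a x 0 z] cbilinear_lzero[of m z] by simp

lemma cbilinear_rscale: "cbilinear m \<Longrightarrow> m z (a *s x) = a *s m z x"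
  using cbilinear_rlin[of m z a x 0] cbilinear_rzero[of m z] by simp

lemmas cbilinear_simps =
  cbilinear_ladd cbilinear_radd cbilinear_lscale cbilinear_rscale cbilinear_lzero cbilinear_rzero

lemma cbilinear_mem_span:
  assumes bm: "cbilinear m" and x: "x \<in> vec.span S" and y: "y \<in> vec.span T"
    and st: "\<And>s t. s \<in> S \<Longrightarrow> t \<in> T \<Longrightarrow> m s t \<in> vec.span P"
  shows "m x y \<in> vec.span P"
proof -
  have left: "m x t \<in> vec.span P" if t: "t \<in> T" for t
    using x
  proof (induction rule: vec.span_induct_alt)
    case base
    then show ?case using cbilinear_lzero[OF bm] vec.span_zero by simp
  next
    case (step c s z)
    then show ?case using st[OF _ t] cbilinear_llin[OF bm] vec.span_add vec.span_scale by metis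
  qed
  from y show ?thesis
  proof (induction rule: vec.span_induct_alt)
    case base
    then show ?case using cbilinear_rzero[OF bm] vec.span_zero by simp
  next
    case (step c t z)
    then show ?case using left cbilinear_rlin[OF bm] vec.span_add vec.span_scale by metis
  qed
qed

lemma alg_iso_refl: "alg_iso m m"
  unfolding alg_iso_def by (rule exI[of _ id]) simp

lemma alg_iso_trans: "alg_iso m1 m2 \<Longrightarrow> alg_iso m2 m3 \<Longrightarrow> alg_iso m1 m3"
  unfolding alg_iso_def
proof (elim exE conjE)
  fix f g
  assume f: "bij f" "\<forall>a x y. f (a *s x + y) = a *s f x + f y" "\<forall>x y. f (m1 x y) = m2 (f x) (f y)"
    and g: "bij g" "\<forall>a x y. g (a *s x + y) = a *s g x + g y" "\<forall>x y. g (m2 x y) = m3 (g x) (g y)"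
  show "\<exists>h. bij h \<and> (\<forall>a x y. h (a *s x + y) = a *s h x + h y) \<and> (\<forall>x y. h (m1 x y) = m3 (h x) (h y))"
    by (rule exI[of _ "g \<circ> f"]) (simp add: f g bij_comp)
qed

lemma alg_iso_of_inverse:
  assumes inv1: "\<And>y. \<psi> (\<phi> y) = y" and inv2: "\<And>y. \<phi> (\<psi> y) = y"
    and lin: "\<And>a x y. \<phi> (a *s x + y) = a *s \<phi> x + \<phi> y"
    and hom: "\<And>x y. m (\<phi> x) (\<phi> y) = \<phi> (m' x y)"
  shows "alg_iso m m'"
  unfolding alg_iso_def
proof (intro exI[of _ \<psi>] conjI allI)
  show "bij \<psi>" unfolding bij_def inj_def surj_def using inv1 inv2 by metis
  fix a x y
  have "\<psi> (a *s x + y) = \<psi> (a *s \<phi> (\<psi> x) + \<phi> (\<psi> y))" by (simp only: inv2)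
  also have "\<dots> = a *s \<psi> x + \<psi> y" by (simp only: lin[symmetric] inv1)
  finally show "\<psi> (a *s x + y) = a *s \<psi> x + \<psi> y" .
next
  fix x y
  have "\<psi> (m x y) = \<psi> (m (\<phi> (\<psi> x)) (\<phi> (\<psi> y)))" by (simp only: inv2)
  also have "\<dots> = m' (\<psi> x) (\<psi> y)" by (simp only: hom inv1)
  finally show "\<psi> (m x y) = m' (\<psi> x) (\<psi> y)" .
qed

lemma alg_iso_of_bij:
  assumes "bij \<phi>" and "\<And>a x y. \<phi> (a *s x + y) = a *s \<phi> x + \<phi> y"
    and "\<And>x y. m (\<phi> x) (\<phi> y) = \<phi> (m' x y)"
  shows "alg_iso m m'"
  by (rule alg_iso_of_inverse[where \<phi>=\<phi> and \<psi>="inv \<phi>"])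
    (use assms in \<open>simp_all add: bij_is_inj bij_is_surj surj_f_inv_f\<close>)

lemma alg_iso_nil_index3:
  assumes "alg_iso m M" and "nil_index3 m"
  shows "nil_index3 M"
proof -
  obtain f where f: "bij f" "\<And>a x y. f (a *s x + y) = a *s f x + f y" "\<And>x y. f (m x y) = M (f x) (f y)"
    using assms(1) unfolding alg_iso_def by blast
  have f0: "f 0 = 0" using f(2)[of 1 0 0] by simp
  show ?thesis unfolding nil_index3_def
  proof
    fix u
    obtain x where x: "u = f x" using f(1) by (metis bij_pointE)
    have "M (M u u) u = f (m (m x x) x)" "M u (M u u) = f (m x (m x x))" unfolding x f(3) by simp_all
    then show "M (M u u) u = 0 \<and> M u (M u u) = 0" using assms(2) f0 unfolding nil_index3_def by simp
  qed
qed

lemma alg_iso_two_step_nilpotent: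
  assumes "alg_iso m M" and "two_step_nilpotent M"
  shows "two_step_nilpotent m"
proof -
  obtain f where f: "bij f" "\<And>a x y. f (a *s x + y) = a *s f x + f y" "\<And>x y. f (m x y) = M (f x) (f y)"
    using assms(1) unfolding alg_iso_def by blast
  have f0: "f 0 = 0" using f(2)[of 1 0 0] by simp
  have "f (m (m x y) z) = f 0 \<and> f (m x (m y z)) = f 0" for x y z
    using assms(2) f0 unfolding f(3) two_step_nilpotent_def by simp
  then show ?thesis
    using bij_is_inj[OF f(1)] unfolding two_step_nilpotent_def by (auto dest: injD)
qed

lemma vec_span_eq_UNIV_iff_dim: "vec.span (S :: V4 set) = UNIV \<longleftrightarrow> vec.dim S = 4"
  using vec.dim_eq_full[of S] by (simp add: vec.dimension_def card_cart_basis)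

lemma vec_span_eq_of_dim:
  assumes "vec.subspace S" and "B \<subseteq> S" and "vec.dim S \<le> vec.dim B"
  shows "vec.span B = S"
  using vec.dim_eq_span[OF assms(2,3)] assms(1) vec.span_eq_iff by blast

lemma vec_exists_dim_insert:
  assumes "vec.subspace S" and "B \<subseteq> S" and "vec.dim B < vec.dim S"
  shows "\<exists>x\<in>S. vec.dim (insert x B) = vec.dim B + 1"
proof -
  have "\<not> S \<subseteq> vec.span B"
  proof
    assume "S \<subseteq> vec.span B"
    then have "vec.dim S \<le> vec.dim B" using vec.dim_subset[of S "vec.span B"] by simp
    then show False using assms(3) by simp
  qed
  then obtain x where "x \<in> S" "x \<notin> vec.span B" by blast
  then show ?thesis using vec.dim_insert[of x B] by (intro bexI[of _ x]) simp_all
qed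

lemma vec_mem_span_singleton: "x \<in> vec.span {v} \<Longrightarrow> \<exists>c. x = c *s v"
  unfolding vec.span_singleton by auto

lemma vec_mem_span_pair: "x \<in> vec.span {u, v} \<Longrightarrow> \<exists>a b. x = a *s u + b *s v"
proof -
  assume "x \<in> vec.span {u, v}"
  then obtain k where "x - k *s u \<in> vec.span {v}" unfolding vec.span_insert by blast
  then obtain j where "x - k *s u = j *s v" using vec_mem_span_singleton by blast
  then have "x = k *s u + j *s v" by (simp add: algebra_simps)
  then show ?thesis by blast
qed

lemma flag_basis_exists:
  assumes U: "vec.subspace U" and W: "vec.subspace W" "W \<subseteq> U"
    and dimU: "vec.dim U = 2" and dimW: "vec.dim W = 1"
  obtains b1 b2 b3 b4 :: V4
  where "W = vec.span {b4}" "U = vec.span {b3, b4}" "vec.span {b1, b2, b3, b4} = UNIV"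
proof -
  have "\<exists>x\<in>W. vec.dim {x} = 1"
    using vec_exists_dim_insert[OF W(1), of "{}"] dimW by simp
  then obtain b4 where b4: "b4 \<in> W" "vec.dim {b4} = 1" by blast
  have W_eq: "W = vec.span {b4}"
    using vec_span_eq_of_dim[OF W(1), of "{b4}"] b4 dimW by simp
  have "b4 \<in> U" using b4(1) W(2) by blast
  then have "\<exists>x\<in>U. vec.dim {x, b4} = 2"
    using vec_exists_dim_insert[OF U, of "{b4}"] b4(2) dimU
    by (simp add: eval_nat_numeral card_cart_basis)
  then obtain b3 where b3: "b3 \<in> U" "vec.dim {b3, b4} = 2" by blast
  have U_eq: "U = vec.span {b3, b4}"
    using vec_span_eq_of_dim[OF U, of "{b3, b4}"] b3 b4 W(2) dimU by auto
  have "\<exists>x. vec.dim {x, b3, b4} = 3"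
    using vec_exists_dim_insert[OF vec.subspace_UNIV, of "{b3, b4}"] b3(2)
    by (simp add: eval_nat_numeral card_cart_basis)
  then obtain b1 where b1: "vec.dim {b1, b3, b4} = 3" by blast
  have "\<exists>x. vec.dim {x, b1, b3, b4} = 4"
    using vec_exists_dim_insert[OF vec.subspace_UNIV, of "{b1, b3, b4}"] b1
    by (simp add: eval_nat_numeral card_cart_basis)
  then obtain b2 where "vec.dim {b2, b1, b3, b4} = 4" by blast
  then have "vec.span {b1, b2, b3, b4} = UNIV"
    using vec_span_eq_UNIV_iff_dim by (simp add: insert_commute)
  with W_eq U_eq show thesis by (rule that)
qed

section \<open>The descending series\<close>

text \<open>\<open>lower_series m k\<close> is the paper's \<open>A\<^sup>k\<^sup>+\<^sup>1\<close>.\<close>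

primrec lower_series :: "(V4 \<Rightarrow> V4 \<Rightarrow> V4) \<Rightarrow> nat \<Rightarrow> V4 set" where
  "lower_series m 0 = UNIV"
| "lower_series m (Suc k) =
     vec.span ({m x y | x y. x \<in> lower_series m k} \<union> {m y x | x y. x \<in> lower_series m k})"

declare lower_series.simps(2) [simp del]

lemma lower_series_subspace: "vec.subspace (lower_series m k)"
  by (cases k) (simp_all add: lower_series.simps(2) vec.subspace_UNIV)

lemma lower_series_span: "vec.span (lower_series m k) = lower_series m k"
  using lower_series_subspace vec.span_eq_iff by blast

lemma lower_series_multL: "x \<in> lower_series m k \<Longrightarrow> m x y \<in> lower_series m (Suc k)"
  unfolding lower_series.simps(2) by (auto intro: vec.span_base)

lemma lower_series_multR: "x \<in> lower_series m k \<Longrightarrow> m y x \<in> lower_series m (Suc k)"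
  unfolding lower_series.simps(2) by (auto intro: vec.span_base)

lemma lower_series_Suc_least:
  assumes "vec.subspace P" and "\<And>x y. x \<in> lower_series m k \<Longrightarrow> m x y \<in> P \<and> m y x \<in> P"
  shows "lower_series m (Suc k) \<subseteq> P"
  unfolding lower_series.simps(2) by (rule vec.span_minimal) (use assms in auto)

lemma lower_series_Suc_subset: "lower_series m (Suc k) \<subseteq> lower_series m k"
proof (induction k)
  case 0
  show ?case by simp
next
  case (Suc k)
  show ?case
    by (rule lower_series_Suc_least[OF lower_series_subspace])
      (use Suc in \<open>blast intro: lower_series_multL lower_series_multR\<close>)
qed

lemma lower_series_subset_span_prods:
  assumes bm: "cbilinear m"
  shows "lower_series m k \<subseteq> vec.span {v. prods m (Suc k) v}"
proof (induction k)
  case 0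
  have "prods m 1 x" for x by (rule prods.single)
  then show ?case by (auto intro: vec.span_base)
next
  case (Suc k)
  let ?P = "vec.span {v. prods m (Suc (Suc k)) v}"
  have prods_Suc: "m s t \<in> ?P \<and> m t s \<in> ?P" if "prods m (Suc k) s" for s t
    using prods.mult[OF that prods.single] prods.mult[OF prods.single that]
    by (auto intro: vec.span_base)
  have "m x y \<in> ?P \<and> m y x \<in> ?P" if "x \<in> lower_series m k" for x y
  proof
    have x: "x \<in> vec.span {v. prods m (Suc k) v}" using Suc that by blast
    have y: "y \<in> vec.span UNIV" by (simp add: vec.span_base)
    show "m x y \<in> ?P" by (rule cbilinear_mem_span[OF bm x y]) (use prods_Suc in blast)
    show "m y x \<in> ?P" by (rule cbilinear_mem_span[OF bm y x]) (use prods_Suc in blast)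
  qed
  then show ?case by (rule lower_series_Suc_least[OF vec.subspace_span])
qed

lemma nilpotent_lower_series_eq_0:
  assumes "cbilinear m" and "nilpotent_alg m"
  obtains n where "lower_series m n = {0}"
proof -
  obtain n where n: "n \<ge> 1" "\<forall>v. prods m n v \<longrightarrow> v = 0"
    using assms(2) unfolding nilpotent_alg_def by blast
  have "vec.span {v. prods m n v} \<subseteq> {0}"
    using n(2) vec.span_mono[of "{v. prods m n v}" "{0}"] by auto
  then have "lower_series m (n - 1) \<subseteq> {0}"
    using lower_series_subset_span_prods[OF assms(1), of "n - 1"] n(1) by simp
  then show thesis
    using that vec.subspace_0[OF lower_series_subspace] by blast
qed

lemma lower_series_stable_eq_0:
  assumes "cbilinear m" and "nilpotent_alg m" and stable: "lower_series m (Suc k) = lower_series m k"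
  shows "lower_series m k = {0}"
proof -
  have const: "lower_series m (k + j) = lower_series m k" for j
  proof (induction j)
    case 0
    show ?case by simp
  next
    case (Suc j)
    have "lower_series m (k + Suc j) = lower_series m (Suc k)"
      by (simp only: add_Suc_right lower_series.simps(2) Suc)
    then show ?case using stable by simp
  qed
  obtain n where n: "lower_series m n = {0}"
    using nilpotent_lower_series_eq_0[OF assms(1,2)] by blast
  have "lower_series m (k + n) \<subseteq> lower_series m n"
    by (rule lift_Suc_antimono_le[of "lower_series m"]) (simp_all add: lower_series_Suc_subset)
  then show ?thesis
    using const[of n] n vec.subspace_0[OF lower_series_subspace] by blast
qed

lemma lower_series_dim_Suc_less:
  assumes "cbilinear m" and "nilpotent_alg m" and "lower_series m k \<noteq> {0}"
  shows "vec.dim (lower_series m (Suc k)) < vec.dim (lower_series m k)"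
proof -
  have "lower_series m (Suc k) \<subset> lower_series m k"
    using lower_series_stable_eq_0[OF assms(1,2)] assms(3) lower_series_Suc_subset by blast
  then show ?thesis by (intro vec.dim_psubset) (simp only: lower_series_span)
qed

lemma lower_series_2_ne_0:
  assumes "\<not> two_step_nilpotent m"
  shows "lower_series m 2 \<noteq> {0}"
proof
  assume zero: "lower_series m 2 = {0}"
  have "m (m x y) z \<in> lower_series m 2 \<and> m x (m y z) \<in> lower_series m 2" for x y z
    using lower_series_multL lower_series_multR
    by (simp add: numeral_2_eq_2)
  then show False
    using assms zero unfolding two_step_nilpotent_def by blast
qed

lemma nil_index3_square_square:
  assumes bm: "cbilinear m" and ni: "nil_index3 m"
  shows "m (m x x) (m x x) = 0"
proof -
  define y where "y = m x x"
  have xy: "m x y = 0" and yx: "m y x = 0" using ni unfolding nil_index3_def y_def by auto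
  text \<open>Expand \<open>((x + t y)(x + t y))(x + t y) = 0\<close> as a polynomial in \<open>t\<close>.\<close>
  have E: "t *s m y y + (t*t) *s m (m y y) x + (t*t*t) *s m (m y y) y = 0" for t
  proof -
    have "m (m (x + t *s y) (x + t *s y)) (x + t *s y) = 0" using ni unfolding nil_index3_def by blast
    moreover have "m (m (x + t *s y) (x + t *s y)) (x + t *s y)
        = t *s m y y + (t*t) *s m (m y y) x + (t*t*t) *s m (m y y) y"
      by (simp add: cbilinear_simps[OF bm] xy yx flip: y_def)
    ultimately show ?thesis by simp
  qed
  have "m y y $ i = 0" for i
  proof -
    have e1: "m y y $ i + m (m y y) x $ i + m (m y y) y $ i = 0"
      using arg_cong[OF E[of 1], of "\<lambda>v. v $ i"] by simp
    have e2: "- m y y $ i + m (m y y) x $ i - m (m y y) y $ i = 0"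
      using arg_cong[OF E[of "-1"], of "\<lambda>v. v $ i"] by simp
    have e3: "2 * m y y $ i + 4 * m (m y y) x $ i + 8 * m (m y y) y $ i = 0"
      using arg_cong[OF E[of 2], of "\<lambda>v. v $ i"] by simp
    show ?thesis using e1 e2 e3 by algebra
  qed
  then show ?thesis unfolding y_def by (simp add: vec_eq_iff)
qed

lemma lower_series_1_subset_span_square:
  assumes bm: "cbilinear m" and gen: "vec.span (insert x (lower_series m 1)) = UNIV"
  shows "lower_series m 1 \<subseteq> vec.span (insert (m x x) (lower_series m 2))"
proof -
  let ?Y = "insert (m x x) (lower_series m 2)"
  have "m s t \<in> vec.span ?Y" if "s \<in> insert x (lower_series m 1)" "t \<in> insert x (lower_series m 1)" for s t
    using that lower_series_multL[of _ m 1] lower_series_multR[of _ m 1]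
    by (auto simp: numeral_2_eq_2 intro: vec.span_base)
  then have "m a b \<in> vec.span ?Y" for a b
    using cbilinear_mem_span[OF bm] gen by blast
  then show ?thesis
    using lower_series_Suc_least[OF vec.subspace_span, of m 0 ?Y] by simp
qed

lemma lower_series_2_subset_3:
  assumes bm: "cbilinear m" and ni: "nil_index3 m"
    and gen1: "vec.span (insert x (lower_series m 1)) = UNIV"
  shows "lower_series m 2 \<subseteq> lower_series m 3"
proof -
  define y where "y = m x x"
  have xy: "m x y = 0" and yx: "m y x = 0" using ni unfolding nil_index3_def y_def by auto
  have yy: "m y y = 0" unfolding y_def by (rule nil_index3_square_square[OF bm ni])
  let ?Y = "insert y (lower_series m 2)"
  have J1: "lower_series m 1 \<subseteq> vec.span ?Y"
    unfolding y_def by (rule lower_series_1_subset_span_square[OF bm gen1])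
  then have "insert x (lower_series m 1) \<subseteq> vec.span (insert x ?Y)"
    using vec.span_mono[of ?Y "insert x ?Y"] vec.span_base[of x "insert x ?Y"] by blast
  then have gen2: "vec.span (insert x ?Y) = UNIV"
    using vec.span_minimal[OF _ vec.subspace_span] gen1 by blast
  have key: "m s t \<in> lower_series m 3" if "s \<in> insert x ?Y" "t \<in> insert x ?Y" "s \<in> ?Y \<or> t \<in> ?Y" for s t
    using that lower_series_multL[of _ m 2] lower_series_multR[of _ m 2] xy yx yy
      vec.subspace_0[OF lower_series_subspace]
    by (auto simp: numeral_3_eq_3 numeral_2_eq_2)
  have "m a b \<in> lower_series m 3 \<and> m b a \<in> lower_series m 3" if "a \<in> lower_series m 1" for a b
  proof -
    have a: "a \<in> vec.span ?Y" and b: "b \<in> vec.span (insert x ?Y)"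
      using that J1 gen2 by auto
    have "m a b \<in> vec.span (lower_series m 3)"
      by (rule cbilinear_mem_span[OF bm a b]) (use key in \<open>blast intro: vec.span_base\<close>)
    moreover have "m b a \<in> vec.span (lower_series m 3)"
      by (rule cbilinear_mem_span[OF bm b a]) (use key in \<open>blast intro: vec.span_base\<close>)
    ultimately show ?thesis by (simp add: lower_series_span)
  qed
  then show ?thesis
    using lower_series_Suc_least[OF lower_series_subspace, of m 1 m 3] by (simp add: numeral_2_eq_2)
qed

lemma dim_lower_series_1_ne_3:
  assumes bm: "cbilinear m" and nil: "nilpotent_alg m" and ni: "nil_index3 m"
    and ne: "lower_series m 2 \<noteq> {0}"
  shows "vec.dim (lower_series m 1) \<noteq> 3"
proof
  assume "vec.dim (lower_series m 1) = 3"
  then obtain x where "vec.dim (insert x (lower_series m 1)) = 4"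
    using vec_exists_dim_insert[OF vec.subspace_UNIV, of "lower_series m 1"]
    by (auto simp: card_cart_basis)
  then have "lower_series m 2 \<subseteq> lower_series m 3"
    by (intro lower_series_2_subset_3[OF bm ni]) (simp add: vec_span_eq_UNIV_iff_dim)
  then have "lower_series m (Suc 2) = lower_series m 2"
    using lower_series_Suc_subset[of m 2] by (simp add: numeral_3_eq_3 eval_nat_numeral)
  then show False using lower_series_stable_eq_0[OF bm nil] ne by blast
qed

lemma dims_lower_series:
  assumes bm: "cbilinear m" and nil: "nilpotent_alg m" and ni: "nil_index3 m"
    and nts: "\<not> two_step_nilpotent m"
  shows "vec.dim (lower_series m 1) = 2" and "vec.dim (lower_series m 2) = 1"
    and "lower_series m 3 = {0}"
proof -
  have ne2: "lower_series m 2 \<noteq> {0}" by (rule lower_series_2_ne_0[OF nts])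
  have ne1: "lower_series m 1 \<noteq> {0}"
    using ne2 lower_series_Suc_subset[of m 1] vec.subspace_0[OF lower_series_subspace, of m 2]
    by (auto simp: numeral_2_eq_2)
  have "axis 1 1 \<noteq> (0 :: V4)" by (simp add: axis_eq_0_iff)
  then have "(UNIV :: V4 set) \<noteq> {0}" by blast
  then have "vec.dim (lower_series m 1) < 4"
    using lower_series_dim_Suc_less[OF bm nil, of 0] by (simp add: card_cart_basis)
  moreover have "vec.dim (lower_series m 2) < vec.dim (lower_series m 1)"
    using lower_series_dim_Suc_less[OF bm nil ne1] by (simp add: numeral_2_eq_2)
  moreover have "vec.dim (lower_series m 3) < vec.dim (lower_series m 2)"
    using lower_series_dim_Suc_less[OF bm nil ne2] by (simp add: numeral_3_eq_3 eval_nat_numeral)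
  moreover have "vec.dim (lower_series m 2) \<noteq> 0"
    using ne2 vec.subspace_0[OF lower_series_subspace] vec.dim_eq_0 by blast
  moreover have "vec.dim (lower_series m 1) \<noteq> 3"
    by (rule dim_lower_series_1_ne_3[OF bm nil ni ne2])
  ultimately have "vec.dim (lower_series m 1) = 2" "vec.dim (lower_series m 2) = 1"
    and "vec.dim (lower_series m 3) = 0" by linarith+
  then show "vec.dim (lower_series m 1) = 2" "vec.dim (lower_series m 2) = 1"
    and "lower_series m 3 = {0}"
    using vec.subspace_0[OF lower_series_subspace, of m 3] by auto
qed

section \<open>Structure constants in an adapted basis\<close>

text \<open>The multiplication with \<open>e\<^sub>ie\<^sub>j = a\<^sub>i\<^sub>j e\<^sub>3 + b\<^sub>i\<^sub>j e\<^sub>4\<close> for \<open>i, j \<le> 2\<close>, \<open>e\<^sub>ie\<^sub>3 = c\<^sub>i e\<^sub>4\<close>,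
  \<open>e\<^sub>3e\<^sub>i = d\<^sub>i e\<^sub>4\<close>, \<open>e\<^sub>3e\<^sub>3 = g e\<^sub>4\<close>, all other products of basis vectors being zero.\<close>

definition adapted_mult ::
  "complex \<Rightarrow> complex \<Rightarrow> complex \<Rightarrow> complex \<Rightarrow> complex \<Rightarrow> complex \<Rightarrow> complex \<Rightarrow> complex \<Rightarrow>
   complex \<Rightarrow> complex \<Rightarrow> complex \<Rightarrow> complex \<Rightarrow> complex \<Rightarrow> V4 \<Rightarrow> V4 \<Rightarrow> V4" where
  "adapted_mult a11 a12 a21 a22 b11 b12 b21 b22 c1 c2 d1 d2 g x y = (\<chi> k.
     if k = 3 then a11*x$1*y$1 + a12*x$1*y$2 + a21*x$2*y$1 + a22*x$2*y$2
     else if k = 4 then b11*x$1*y$1 + b12*x$1*y$2 + b21*x$2*y$1 + b22*x$2*y$2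
       + c1*x$1*y$3 + c2*x$2*y$3 + d1*x$3*y$1 + d2*x$3*y$2 + g*x$3*y$3
     else 0)"

lemma bij_basis_coordinates:
  fixes b1 b2 b3 b4 :: V4
  assumes sp: "vec.span {b1, b2, b3, b4} = UNIV"
  shows "bij (\<lambda>y :: V4. y$1 *s b1 + y$2 *s b2 + y$3 *s b3 + y$4 *s b4)"
proof -
  define \<phi> where "\<phi> y = y$1 *s b1 + y$2 *s b2 + y$3 *s b3 + y$4 *s b4" for y :: V4
  have add: "\<phi> (x + y) = \<phi> x + \<phi> y" and scale: "\<phi> (a *s x) = a *s \<phi> x" for a x y
    unfolding \<phi>_def by (simp_all add: vec_eq_iff algebra_simps)
  have linear: "Vector_Spaces.linear (*s) (*s) \<phi>"
    unfolding Vector_Spaces.linear_iff by (intro conjI allI vec.vector_space_axioms add scale)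
  have "b1 = \<phi> (axis 1 1)" "b2 = \<phi> (axis 2 1)" "b3 = \<phi> (axis 3 1)" "b4 = \<phi> (axis 4 1)"
    unfolding \<phi>_def by (simp_all add: axis_def)
  then have "{b1, b2, b3, b4} \<subseteq> range \<phi>" by auto
  moreover have "vec.subspace (range \<phi>)"
    unfolding vec.subspace_def
  proof (intro conjI ballI allI)
    show "0 \<in> range \<phi>" by (rule range_eqI[of _ _ 0]) (simp add: \<phi>_def)
    show "x + y \<in> range \<phi>" if "x \<in> range \<phi>" "y \<in> range \<phi>" for x y
      using that by (auto simp flip: add)
    show "c *s x \<in> range \<phi>" if "x \<in> range \<phi>" for c x
      using that by (auto simp flip: scale)
  qed
  ultimately have "vec.span {b1, b2, b3, b4} \<subseteq> range \<phi>"
    by (rule vec.span_minimal)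
  then have surj: "surj \<phi>" using sp by auto
  moreover have "inj \<phi>"
    by (rule vec.linear_surjective_imp_injective[OF linear surj]) simp
  ultimately show ?thesis by (simp add: bij_def \<phi>_def[abs_def])
qed

lemma alg_iso_adapted_mult:
  assumes bm: "cbilinear m" and sp: "vec.span {b1, b2, b3, b4} = UNIV"
  and p11: "m b1 b1 = a11 *s b3 + b11 *s b4" and p12: "m b1 b2 = a12 *s b3 + b12 *s b4"
  and p21: "m b2 b1 = a21 *s b3 + b21 *s b4" and p22: "m b2 b2 = a22 *s b3 + b22 *s b4"
  and q13: "m b1 b3 = c1 *s b4" and q23: "m b2 b3 = c2 *s b4"
  and q31: "m b3 b1 = d1 *s b4" and q32: "m b3 b2 = d2 *s b4" and q33: "m b3 b3 = g *s b4"
  and z1: "\<And>x. m b4 x = 0" and z2: "\<And>x. m x b4 = 0"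
  shows "alg_iso m (adapted_mult a11 a12 a21 a22 b11 b12 b21 b22 c1 c2 d1 d2 g)"
proof -
  define \<phi> where "\<phi> = (\<lambda>y :: V4. y$1 *s b1 + y$2 *s b2 + y$3 *s b3 + y$4 *s b4)"
  have lin: "\<phi> (a *s x + y) = a *s \<phi> x + \<phi> y" for a x y
    unfolding \<phi>_def by (simp add: vec_eq_iff algebra_simps)
  have hom: "m (\<phi> x) (\<phi> y) = \<phi> (adapted_mult a11 a12 a21 a22 b11 b12 b21 b22 c1 c2 d1 d2 g x y)" for x y
  proof -
    have "m (\<phi> x) (\<phi> y) = (x$1*y$1*a11 + x$1*y$2*a12 + x$2*y$1*a21 + x$2*y$2*a22) *s b3 +
       (x$1*y$1*b11 + x$1*y$2*b12 + x$2*y$1*b21 + x$2*y$2*b22 + x$1*y$3*c1 + x$2*y$3*c2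
         + x$3*y$1*d1 + x$3*y$2*d2 + x$3*y$3*g) *s b4"
      unfolding \<phi>_def
      by (simp add: cbilinear_simps[OF bm] p11 p12 p21 p22 q13 q23 q31 q32 q33 z1 z2)
         (simp add: vec_eq_iff algebra_simps)
    also have "\<dots> = \<phi> (adapted_mult a11 a12 a21 a22 b11 b12 b21 b22 c1 c2 d1 d2 g x y)"
      unfolding \<phi>_def by (simp add: adapted_mult_def vec_eq_iff algebra_simps)
    finally show ?thesis .
  qed
  have "bij \<phi>" unfolding \<phi>_def by (rule bij_basis_coordinates[OF sp])
  then show ?thesis using lin hom by (rule alg_iso_of_bij)
qed

lemma alg_iso_adapted_mult_exists:
  assumes bm: "cbilinear m" and sp: "vec.span {b1, b2, b3, b4} = UNIV"
    and prod: "\<And>x y. m x y \<in> vec.span {b3, b4}"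
    and prod3: "\<And>x. m b3 x \<in> vec.span {b4} \<and> m x b3 \<in> vec.span {b4}"
    and ann4: "\<And>x. m b4 x = 0 \<and> m x b4 = 0"
  obtains a11 a12 a21 a22 b11 b12 b21 b22 c1 c2 d1 d2 g
  where "alg_iso m (adapted_mult a11 a12 a21 a22 b11 b12 b21 b22 c1 c2 d1 d2 g)"
proof -
  obtain a11 b11 where p11: "m b1 b1 = a11 *s b3 + b11 *s b4" using vec_mem_span_pair prod by blast
  obtain a12 b12 where p12: "m b1 b2 = a12 *s b3 + b12 *s b4" using vec_mem_span_pair prod by blast
  obtain a21 b21 where p21: "m b2 b1 = a21 *s b3 + b21 *s b4" using vec_mem_span_pair prod by blast
  obtain a22 b22 where p22: "m b2 b2 = a22 *s b3 + b22 *s b4" using vec_mem_span_pair prod by blast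
  obtain c1 where q13: "m b1 b3 = c1 *s b4" using vec_mem_span_singleton prod3 by blast
  obtain c2 where q23: "m b2 b3 = c2 *s b4" using vec_mem_span_singleton prod3 by blast
  obtain d1 where q31: "m b3 b1 = d1 *s b4" using vec_mem_span_singleton prod3 by blast
  obtain d2 where q32: "m b3 b2 = d2 *s b4" using vec_mem_span_singleton prod3 by blast
  obtain g where q33: "m b3 b3 = g *s b4" using vec_mem_span_singleton prod3 by blast
  show thesis
    using alg_iso_adapted_mult[OF bm sp p11 p12 p21 p22 q13 q23 q31 q32 q33] ann4 that by blast
qed

lemma two_step_nilpotent_adapted_mult:
  assumes "(a11 = 0 \<and> a12 = 0 \<and> a21 = 0 \<and> a22 = 0) \<or> (c1 = 0 \<and> c2 = 0 \<and> d1 = 0 \<and> d2 = 0 \<and> g = 0)"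
  shows "two_step_nilpotent (adapted_mult a11 a12 a21 a22 b11 b12 b21 b22 c1 c2 d1 d2 g)"
  using assms
proof
  assume "a11 = 0 \<and> a12 = 0 \<and> a21 = 0 \<and> a22 = 0"
  then show ?thesis by (simp add: two_step_nilpotent_def adapted_mult_def vec_eq_iff forall_4)
next
  assume "c1 = 0 \<and> c2 = 0 \<and> d1 = 0 \<and> d2 = 0 \<and> g = 0"
  then show ?thesis by (simp add: two_step_nilpotent_def adapted_mult_def vec_eq_iff forall_4)
qed

lemma binary_forms_product_eq_0:
  fixes a b c l1 l2 :: complex
  assumes prod: "\<And>u v. (a * u * u + b * u * v + c * v * v) * (l1 * u + l2 * v) = 0" and l: "l1 \<noteq> 0 \<or> l2 \<noteq> 0"
  shows "a = 0 \<and> b = 0 \<and> c = 0"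
proof -
  have a: "a * l1 = 0" and c: "c * l2 = 0" using prod[of 1 0] prod[of 0 1] by simp_all
  have "(a + b + c) * (l1 + l2) = 0" "(a - b + c) * (l1 - l2) = 0"
    using prod[of 1 1] prod[of 1 "-1"] by simp_all
  then have ab: "a * l2 + b * l1 = 0" and bc: "b * l2 + c * l1 = 0"
    using a c by algebra+
  show ?thesis
  proof (cases "l1 = 0")
    case False
    then show ?thesis using a ab bc by simp
  next
    case True
    then show ?thesis using l c ab bc by simp
  qed
qed

lemma nil_index3_adapted_mult:
  assumes ni: "nil_index3 (adapted_mult a11 a12 a21 a22 b11 b12 b21 b22 c1 c2 d1 d2 g)"
    and nz: "\<not> (c1 = 0 \<and> c2 = 0 \<and> d1 = 0 \<and> d2 = 0 \<and> g = 0)"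
  shows "a11 = 0 \<and> a22 = 0 \<and> a21 = -a12"
proof -
  let ?M = "adapted_mult a11 a12 a21 a22 b11 b12 b21 b22 c1 c2 d1 d2 g"
  define q where "q u v = a11 * u * u + (a12 + a21) * u * v + a22 * v * v" for u v
  text \<open>The \<open>e\<^sub>4\<close>-components of \<open>(xx)x\<close> and \<open>x(xx)\<close> for \<open>x = u e\<^sub>1 + v e\<^sub>2 + s e\<^sub>3\<close>.\<close>
  have E: "q u v * (d1 * u + d2 * v + g * s) = 0 \<and> q u v * (c1 * u + c2 * v + g * s) = 0" for u v s
  proof -
    define x :: V4 where "x = (\<chi> k. if k = 1 then u else if k = 2 then v else if k = 3 then s else 0)"
    have "?M (?M x x) x $ 4 = 0" "?M x (?M x x) $ 4 = 0" using ni unfolding nil_index3_def by simp_all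
    moreover have "?M (?M x x) x $ 4 = q u v * (d1 * u + d2 * v + g * s)"
      "?M x (?M x x) $ 4 = q u v * (c1 * u + c2 * v + g * s)"
      unfolding x_def q_def by (simp_all add: adapted_mult_def algebra_simps)
    ultimately show ?thesis by simp
  qed
  have "a11 = 0 \<and> a12 + a21 = 0 \<and> a22 = 0"
  proof (cases "g = 0")
    case False
    have "q u v * g = 0" for u v
      using E[of u v 0] E[of u v 1] by (simp add: algebra_simps)
    then show ?thesis using False q_def[of 1 0] q_def[of 0 1] q_def[of 1 1] by auto
  next
    case True
    then have "(d1 \<noteq> 0 \<or> d2 \<noteq> 0) \<or> (c1 \<noteq> 0 \<or> c2 \<noteq> 0)" using nz by auto
    then show ?thesis
    proof
      assume "d1 \<noteq> 0 \<or> d2 \<noteq> 0"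
      then show ?thesis
        using binary_forms_product_eq_0[of a11 "a12 + a21" a22 d1 d2] E True unfolding q_def by simp
    next
      assume "c1 \<noteq> 0 \<or> c2 \<noteq> 0"
      then show ?thesis
        using binary_forms_product_eq_0[of a11 "a12 + a21" a22 c1 c2] E True unfolding q_def by simp
    qed
  qed
  then show ?thesis by (simp add: eq_neg_iff_add_eq_0 add.commute)
qed

text \<open>The family containing all algebras of the theorem: \<open>e\<^sub>1e\<^sub>2 = -e\<^sub>2e\<^sub>1 = w e\<^sub>3\<close>.\<close>

definition param_mult ::
  "complex \<Rightarrow> complex \<Rightarrow> complex \<Rightarrow> complex \<Rightarrow> complex \<Rightarrow> complex \<Rightarrow> complex \<Rightarrow> complex \<Rightarrow>
   complex \<Rightarrow> complex \<Rightarrow> V4 \<Rightarrow> V4 \<Rightarrow> V4" where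
  "param_mult w b11 b12 b21 b22 c1 c2 d1 d2 g = adapted_mult 0 w (-w) 0 b11 b12 b21 b22 c1 c2 d1 d2 g"

lemma alg_iso_param_mult_exists:
  assumes bm: "cbilinear m" and nil: "nilpotent_alg m" and ni: "nil_index3 m"
    and nts: "\<not> two_step_nilpotent m"
  obtains w b11 b12 b21 b22 c1 c2 d1 d2 g
  where "w \<noteq> 0" and "\<not> (c1 = 0 \<and> c2 = 0 \<and> d1 = 0 \<and> d2 = 0 \<and> g = 0)"
    and "alg_iso m (param_mult w b11 b12 b21 b22 c1 c2 d1 d2 g)"
proof -
  note dims = dims_lower_series[OF bm nil ni nts]
  have "lower_series m 2 \<subseteq> lower_series m 1"
    using lower_series_Suc_subset[of m 1] by (simp add: numeral_2_eq_2)
  then obtain b1 b2 b3 b4 where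
    J2: "lower_series m 2 = vec.span {b4}" and J1: "lower_series m 1 = vec.span {b3, b4}"
    and sp: "vec.span {b1, b2, b3, b4} = UNIV"
    using flag_basis_exists[OF lower_series_subspace lower_series_subspace _ dims(1,2)] by metis
  have "m x y \<in> vec.span {b3, b4}" for x y
    using lower_series_multL[of x m 0 y] J1 by simp
  moreover have "m b3 x \<in> vec.span {b4} \<and> m x b3 \<in> vec.span {b4}" for x
    using lower_series_multL[of b3 m 1 x] lower_series_multR[of b3 m 1 x] J1 J2
    by (simp add: numeral_2_eq_2 vec.span_base)
  moreover have "m b4 x = 0 \<and> m x b4 = 0" for x
    using lower_series_multL[of b4 m 2 x] lower_series_multR[of b4 m 2 x] J2 dims(3)
    by (simp add: numeral_3_eq_3 eval_nat_numeral vec.span_base)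
  ultimately obtain a11 a12 a21 a22 b11 b12 b21 b22 c1 c2 d1 d2 g
    where iso: "alg_iso m (adapted_mult a11 a12 a21 a22 b11 b12 b21 b22 c1 c2 d1 d2 g)"
    using alg_iso_adapted_mult_exists[OF bm sp] by metis
  have nz: "\<not> (c1 = 0 \<and> c2 = 0 \<and> d1 = 0 \<and> d2 = 0 \<and> g = 0)"
    using nts alg_iso_two_step_nilpotent[OF iso two_step_nilpotent_adapted_mult] by blast
  have a: "a11 = 0 \<and> a22 = 0 \<and> a21 = -a12"
    by (rule nil_index3_adapted_mult[OF alg_iso_nil_index3[OF iso ni] nz])
  then have "a12 \<noteq> 0"
    using nts alg_iso_two_step_nilpotent[OF iso two_step_nilpotent_adapted_mult] by auto
  with nz iso a show thesis
    using that[of a12 c1 c2 d1 d2 g b11 b12 b21 b22] by (simp add: param_mult_def)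
qed

section \<open>Changes of basis within the family\<close>

lemma cramer_2x2:
  fixes p q r t :: complex
  assumes "p * t - q * r \<noteq> 0"
  shows "p * ((t * a - r * b) / (p * t - q * r)) + r * ((p * b - q * a) / (p * t - q * r)) = a"
    and "q * ((t * a - r * b) / (p * t - q * r)) + t * ((p * b - q * a) / (p * t - q * r)) = b"
proof -
  have "p * (t * a - r * b) + r * (p * b - q * a) = (p * t - q * r) * a"
    and "q * (t * a - r * b) + t * (p * b - q * a) = (p * t - q * r) * b"
    by (simp_all add: algebra_simps)
  then show "p * ((t * a - r * b) / (p * t - q * r)) + r * ((p * b - q * a) / (p * t - q * r)) = a"
    and "q * ((t * a - r * b) / (p * t - q * r)) + t * ((p * b - q * a) / (p * t - q * r)) = b"
    using assms by (simp_all add: add_divide_distrib[symmetric])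
qed

lemma bij_block_diagonal:
  fixes p q r t \<sigma> \<mu> :: complex
  assumes nz: "p * t - q * r \<noteq> 0" "\<sigma> \<noteq> 0" "\<mu> \<noteq> 0"
  shows "bij (\<lambda>y :: V4. (\<chi> k. if k = 1 then p * y$1 + r * y$2 else if k = 2 then q * y$1 + t * y$2
      else if k = 3 then \<sigma> * y$3 else \<mu> * y$4) :: V4)" (is "bij ?\<phi>")
proof (rule o_bij)
  define D where "D = p * t - q * r"
  define \<psi> :: "V4 \<Rightarrow> V4" where "\<psi> y = (\<chi> k. if k = 1 then (t * y$1 - r * y$2) / D
      else if k = 2 then (p * y$2 - q * y$1) / D else if k = 3 then y$3 / \<sigma> else y$4 / \<mu>)" for y
  show "\<psi> \<circ> ?\<phi> = id"
    using nz by (simp add: \<psi>_def D_def fun_eq_iff vec_eq_iff forall_4 field_simps)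
  show "?\<phi> \<circ> \<psi> = id"
    using cramer_2x2[OF nz(1)] nz by (simp add: \<psi>_def D_def fun_eq_iff vec_eq_iff forall_4)
qed

text \<open>The basis change \<open>e\<^sub>1' = p e\<^sub>1 + q e\<^sub>2\<close>, \<open>e\<^sub>2' = r e\<^sub>1 + t e\<^sub>2\<close>, \<open>e\<^sub>3' = \<sigma> e\<^sub>3\<close>, \<open>e\<^sub>4' = \<mu> e\<^sub>4\<close>.\<close>

lemma param_mult_iso_GL:
  fixes p q r t \<sigma> \<mu> :: complex
  assumes nz: "p * t - q * r \<noteq> 0" "\<sigma> \<noteq> 0" "\<mu> \<noteq> 0"
  and eqs: "\<sigma> * w' = w * (p * t - q * r)"
    "\<mu> * b11' = b11 * p * p + b12 * p * q + b21 * q * p + b22 * q * q"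
    "\<mu> * b12' = b11 * p * r + b12 * p * t + b21 * q * r + b22 * q * t"
    "\<mu> * b21' = b11 * r * p + b12 * r * q + b21 * t * p + b22 * t * q"
    "\<mu> * b22' = b11 * r * r + b12 * r * t + b21 * t * r + b22 * t * t"
    "\<mu> * c1' = \<sigma> * (c1 * p + c2 * q)" "\<mu> * c2' = \<sigma> * (c1 * r + c2 * t)"
    "\<mu> * d1' = \<sigma> * (d1 * p + d2 * q)" "\<mu> * d2' = \<sigma> * (d1 * r + d2 * t)"
    "\<mu> * g' = \<sigma> * \<sigma> * g"
  shows "alg_iso (param_mult w b11 b12 b21 b22 c1 c2 d1 d2 g)
    (param_mult w' b11' b12' b21' b22' c1' c2' d1' d2' g')"
proof -
  let ?M = "param_mult w b11 b12 b21 b22 c1 c2 d1 d2 g"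
  let ?M' = "param_mult w' b11' b12' b21' b22' c1' c2' d1' d2' g'"
  define \<phi> :: "V4 \<Rightarrow> V4" where "\<phi> = (\<lambda>y. \<chi> k. if k = 1 then p * y$1 + r * y$2
      else if k = 2 then q * y$1 + t * y$2 else if k = 3 then \<sigma> * y$3 else \<mu> * y$4)"
  have "bij \<phi>" unfolding \<phi>_def by (rule bij_block_diagonal[OF nz])
  moreover have "\<phi> (a *s x + y) = a *s \<phi> x + \<phi> y" for a x y
    by (simp add: \<phi>_def vec_eq_iff forall_4 algebra_simps)
  moreover have "?M (\<phi> x) (\<phi> y) = \<phi> (?M' x y)" for x y
  proof -
    have "\<phi> (?M' x y) $ 3 = (\<sigma> * w') * (x$1 * y$2 - x$2 * y$1)"
      by (simp add: \<phi>_def param_mult_def adapted_mult_def algebra_simps)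
    also have "\<dots> = ?M (\<phi> x) (\<phi> y) $ 3"
      unfolding eqs by (simp add: \<phi>_def param_mult_def adapted_mult_def algebra_simps)
    finally have c3: "?M (\<phi> x) (\<phi> y) $ 3 = \<phi> (?M' x y) $ 3" ..
    have "\<phi> (?M' x y) $ 4 =
      (\<mu> * b11') * x$1 * y$1 + (\<mu> * b12') * x$1 * y$2 + (\<mu> * b21') * x$2 * y$1 + (\<mu> * b22') * x$2 * y$2
      + (\<mu> * c1') * x$1 * y$3 + (\<mu> * c2') * x$2 * y$3 + (\<mu> * d1') * x$3 * y$1 + (\<mu> * d2') * x$3 * y$2
      + (\<mu> * g') * x$3 * y$3"
      by (simp add: \<phi>_def param_mult_def adapted_mult_def algebra_simps)
    also have "\<dots> = ?M (\<phi> x) (\<phi> y) $ 4"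
      unfolding eqs by (simp add: \<phi>_def param_mult_def adapted_mult_def algebra_simps)
    finally have c4: "?M (\<phi> x) (\<phi> y) $ 4 = \<phi> (?M' x y) $ 4" ..
    show ?thesis
      using c3 c4 by (simp add: vec_eq_iff forall_4 \<phi>_def param_mult_def adapted_mult_def)
  qed
  ultimately show ?thesis by (rule alg_iso_of_bij)
qed

lemma param_mult_iso_GL_transform:
  fixes p q r t \<sigma> \<mu> :: complex
  assumes nz: "p * t - q * r \<noteq> 0" "\<sigma> \<noteq> 0" "\<mu> \<noteq> 0"
  and eqs: "\<sigma> * w' = w * (p * t - q * r)"
    "\<mu> * c1' = \<sigma> * (c1 * p + c2 * q)" "\<mu> * c2' = \<sigma> * (c1 * r + c2 * t)"
    "\<mu> * d1' = \<sigma> * (d1 * p + d2 * q)" "\<mu> * d2' = \<sigma> * (d1 * r + d2 * t)"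
    "\<mu> * g' = \<sigma> * \<sigma> * g"
  shows "alg_iso (param_mult w b11 b12 b21 b22 c1 c2 d1 d2 g) (param_mult w'
    ((b11 * p * p + b12 * p * q + b21 * q * p + b22 * q * q) / \<mu>)
    ((b11 * p * r + b12 * p * t + b21 * q * r + b22 * q * t) / \<mu>)
    ((b11 * r * p + b12 * r * q + b21 * t * p + b22 * t * q) / \<mu>)
    ((b11 * r * r + b12 * r * t + b21 * t * r + b22 * t * t) / \<mu>) c1' c2' d1' d2' g')"
  by (rule param_mult_iso_GL[OF nz eqs(1) _ _ _ _ eqs(2-6)]) (use nz in simp_all)

text \<open>The basis change \<open>e\<^sub>1' = e\<^sub>1 + p\<^sub>a e\<^sub>3\<close>, \<open>e\<^sub>2' = e\<^sub>2 + p\<^sub>b e\<^sub>3\<close>, \<open>e\<^sub>3' = e\<^sub>3 + l e\<^sub>4\<close>.\<close>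

lemma param_mult_iso_unipotent:
  fixes pa pb l :: complex
  assumes eqs: "b11' = b11 + pa * (c1 + d1) + pa * pa * g"
    "b12' = b12 + pb * c1 + pa * d2 + pa * pb * g - w * l"
    "b21' = b21 + pa * c2 + pb * d1 + pa * pb * g + w * l"
    "b22' = b22 + pb * (c2 + d2) + pb * pb * g"
    "c1' = c1 + pa * g" "c2' = c2 + pb * g" "d1' = d1 + pa * g" "d2' = d2 + pb * g"
  shows "alg_iso (param_mult w b11 b12 b21 b22 c1 c2 d1 d2 g) (param_mult w b11' b12' b21' b22' c1' c2' d1' d2' g)"
proof -
  define \<phi> :: "V4 \<Rightarrow> V4" where "\<phi> y = (\<chi> k. if k = 3 then y$3 + pa * y$1 + pb * y$2
      else if k = 4 then y$4 + l * y$3 else y$k)" for y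
  define \<psi> :: "V4 \<Rightarrow> V4" where "\<psi> y = (\<chi> k. if k = 3 then y$3 - pa * y$1 - pb * y$2
      else if k = 4 then y$4 - l * (y$3 - pa * y$1 - pb * y$2) else y$k)" for y
  show ?thesis
  proof (rule alg_iso_of_inverse[where \<phi> = \<phi> and \<psi> = \<psi>])
    show "\<psi> (\<phi> y) = y" "\<phi> (\<psi> y) = y" for y
      by (simp_all add: \<phi>_def \<psi>_def vec_eq_iff forall_4)
    show "\<phi> (a *s x + y) = a *s \<phi> x + \<phi> y" for a x y
      by (simp add: \<phi>_def vec_eq_iff forall_4 algebra_simps)
  qed (simp add: eqs \<phi>_def param_mult_def adapted_mult_def vec_eq_iff forall_4 algebra_simps)
qed

lemma param_mult_iso_unipotent_transform:
  "alg_iso (param_mult w b11 b12 b21 b22 c1 c2 d1 d2 g) (param_mult w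
    (b11 + pa * (c1 + d1) + pa * pa * g) (b12 + pb * c1 + pa * d2 + pa * pb * g - w * l)
    (b21 + pa * c2 + pb * d1 + pa * pb * g + w * l) (b22 + pb * (c2 + d2) + pb * pb * g)
    (c1 + pa * g) (c2 + pb * g) (d1 + pa * g) (d2 + pb * g) g)"
  by (rule param_mult_iso_unipotent[where pa = pa and pb = pb and l = l]) simp_all

text \<open>Via the change \<open>e\<^sub>3' = e\<^sub>3 + (b\<^sub>1\<^sub>2 - b\<^sub>1\<^sub>2')/w e\<^sub>4\<close>.\<close>

lemma param_mult_iso_shift:
  assumes "w \<noteq> 0" and "b12 + b21 = b12' + b21'"
  shows "alg_iso (param_mult w b11 b12 b21 b22 c1 c2 d1 d2 g) (param_mult w b11 b12' b21' b22 c1 c2 d1 d2 g)"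
proof -
  have "w * ((b12 - b12') / w) = b12 - b12'" using assms(1) by simp
  moreover have "b21' = b21 + (b12 - b12')" using assms(2) by algebra
  ultimately show ?thesis
    by (intro param_mult_iso_unipotent[where pa = 0 and pb = 0 and l = "(b12 - b12') / w"]) simp_all
qed

lemma param_mult_iso_flip_e3:
  "alg_iso (param_mult 1 b11 b12 b21 b22 1 0 (-1) 0 0) (param_mult (-1) b11 b12 b21 b22 (-1) 0 1 0 0)"
  by (rule param_mult_iso_GL[where p=1 and q=0 and r=0 and t=1 and \<sigma>="-1" and \<mu>=1]) simp_all

lemma param_mult_tables:
  "L01 = param_mult 1 0 0 0 0 1 0 (-1) 0 0" "L09 = param_mult (-1) 0 1 0 0 (-1) 0 1 0 0"
  "L10 = param_mult (-1) 0 0 0 1 (-1) 0 1 0 0" "L11 = param_mult (-1) 1 0 0 1 (-1) 0 1 0 0"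
  "L12 = param_mult (-1) 1 0 0 0 (-1) 0 1 0 0"
  "M03 \<alpha> = param_mult 1 0 0 0 0 \<alpha> 0 (1 - \<alpha>) 0 0" "M04 \<alpha> = param_mult 1 0 0 0 1 \<alpha> 0 (1 - \<alpha>) 0 0"
  "M05 = param_mult 1 0 0 0 0 0 1 1 (-1) 0" "M06 = param_mult 1 0 0 0 1 0 1 1 (-1) 0"
  "M07 = param_mult 1 0 0 0 0 0 0 0 0 1" "M08 = param_mult 1 0 1 0 0 0 0 0 0 1"
  "M09 = param_mult 1 1 0 0 0 0 0 0 0 1" "M10 \<alpha> = param_mult 1 \<alpha> 0 0 0 1 0 (-1) 0 1"
  "M11 = param_mult 1 0 1 0 0 1 0 (-1) 0 1" "M12 \<alpha> = param_mult 1 \<alpha> 0 0 1 1 0 (-1) 0 1"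
  unfolding L01_def L09_def L10_def L11_def L12_def M03_def M04_def M05_def M06_def M07_def M08_def
    M09_def M10_def M11_def M12_def
  by (simp_all add: fun_eq_iff param_mult_def adapted_mult_def tbl_mult_def tbl_def sum_4 vec_eq_iff
      forall_4 e_def axis_def algebra_simps)

definition listed :: "(V4 \<Rightarrow> V4 \<Rightarrow> V4) \<Rightarrow> bool" where
  "listed m \<longleftrightarrow> alg_iso m L01 \<or> alg_iso m L09 \<or> alg_iso m L10 \<or> alg_iso m L11 \<or> alg_iso m L12 \<or>
    (\<exists>\<alpha>. alg_iso m (M03 \<alpha>)) \<or> (\<exists>\<alpha>. alg_iso m (M04 \<alpha>)) \<or>
    alg_iso m M05 \<or> alg_iso m M06 \<or> alg_iso m M07 \<or> alg_iso m M08 \<or> alg_iso m M09 \<or>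
    (\<exists>\<alpha>. alg_iso m (M10 \<alpha>)) \<or> alg_iso m M11 \<or> (\<exists>\<alpha>. alg_iso m (M12 \<alpha>))"

lemma listed_alg_iso: "alg_iso m m' \<Longrightarrow> listed m' \<Longrightarrow> listed m"
  unfolding listed_def using alg_iso_trans[of m m'] by blast

lemma listed_shift:
  "w \<noteq> 0 \<Longrightarrow> b12 + b21 = b12' + b21' \<Longrightarrow> listed (param_mult w b11 b12' b21' b22 c1 c2 d1 d2 g) \<Longrightarrow>
    listed (param_mult w b11 b12 b21 b22 c1 c2 d1 d2 g)"
  by (rule listed_alg_iso[OF param_mult_iso_shift])

lemma listed_L01: "listed (param_mult 1 0 0 0 0 1 0 (-1) 0 0)"
  unfolding listed_def param_mult_tables using alg_iso_refl by blast
lemma listed_L09: "listed (param_mult 1 0 1 0 0 1 0 (-1) 0 0)"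
  unfolding listed_def param_mult_tables using param_mult_iso_flip_e3 by blast
lemma listed_L10: "listed (param_mult 1 0 0 0 1 1 0 (-1) 0 0)"
  unfolding listed_def param_mult_tables using param_mult_iso_flip_e3 by blast
lemma listed_L11: "listed (param_mult 1 1 0 0 1 1 0 (-1) 0 0)"
  unfolding listed_def param_mult_tables using param_mult_iso_flip_e3 by blast
lemma listed_L12: "listed (param_mult 1 1 0 0 0 1 0 (-1) 0 0)"
  unfolding listed_def param_mult_tables using param_mult_iso_flip_e3 by blast
lemma listed_M03: "listed (param_mult 1 0 0 0 0 \<alpha> 0 (1 - \<alpha>) 0 0)"
  unfolding listed_def param_mult_tables using alg_iso_refl by blast
lemma listed_M04: "listed (param_mult 1 0 0 0 1 \<alpha> 0 (1 - \<alpha>) 0 0)"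
  unfolding listed_def param_mult_tables using alg_iso_refl by blast
lemma listed_M05: "listed (param_mult 1 0 0 0 0 0 1 1 (-1) 0)"
  unfolding listed_def param_mult_tables using alg_iso_refl by blast
lemma listed_M06: "listed (param_mult 1 0 0 0 1 0 1 1 (-1) 0)"
  unfolding listed_def param_mult_tables using alg_iso_refl by blast
lemma listed_M07: "listed (param_mult 1 0 0 0 0 0 0 0 0 1)"
  unfolding listed_def param_mult_tables using alg_iso_refl by blast
lemma listed_M08: "listed (param_mult 1 0 1 0 0 0 0 0 0 1)"
  unfolding listed_def param_mult_tables using alg_iso_refl by blast
lemma listed_M09: "listed (param_mult 1 1 0 0 0 0 0 0 0 1)"
  unfolding listed_def param_mult_tables using alg_iso_refl by blast
lemma listed_M10: "listed (param_mult 1 \<alpha> 0 0 0 1 0 (-1) 0 1)"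
  unfolding listed_def param_mult_tables using alg_iso_refl by blast
lemma listed_M11: "listed (param_mult 1 0 1 0 0 1 0 (-1) 0 1)"
  unfolding listed_def param_mult_tables using alg_iso_refl by blast
lemma listed_M12: "listed (param_mult 1 \<alpha> 0 0 1 1 0 (-1) 0 1)"
  unfolding listed_def param_mult_tables using alg_iso_refl by blast

lemma complex_square_root_exists: "\<exists>r :: complex. r * r = z"
  by (metis power2_csqrt power2_eq_square)

section \<open>Reduction to the normal forms\<close>

subsection \<open>The case \<open>e\<^sub>3e\<^sub>3 \<noteq> 0\<close>\<close>

lemma listed_M08_nondegenerate:
  assumes disc: "h * h - 4 * b11 * b22 \<noteq> 0"
  shows "listed (param_mult 1 b11 h 0 b22 0 0 0 0 1)"
proof (cases "b11 = 0")
  case True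
  then have h0: "h \<noteq> 0" using disc by auto
  have "alg_iso (param_mult 1 b11 h 0 b22 0 0 0 0 1) (param_mult 1 0 1 0 0 0 0 0 0 1)"
    by (rule param_mult_iso_GL[where p=1 and q=0 and r="-b22" and t=h and \<sigma>=h and \<mu>="h * h"])
      (use h0 True in \<open>simp_all add: field_simps\<close>)
  then show ?thesis using listed_M08 listed_alg_iso by blast
next
  case False
  obtain \<rho> where \<rho>: "\<rho> * \<rho> = h * h - 4 * b11 * b22" using complex_square_root_exists by blast
  have \<rho>0: "\<rho> \<noteq> 0" using \<rho> disc by auto
  have b22: "b22 = (h * h - \<rho> * \<rho>) / (4 * b11)" using \<rho> False by (simp add: field_simps)
  text \<open>\<open>(p, q)\<close> and \<open>(r, t)\<close> span the two isotropic lines of \<open>b\<^sub>1\<^sub>1u\<^sup>2 + h uv + b\<^sub>2\<^sub>2v\<^sup>2\<close>.\<close>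
  define p where "p = (h - \<rho>) / (4 * b11)"
  define q :: complex where "q = -1/2"
  define r where "r = -h - \<rho>"
  define t where "t = 2 * b11"
  have iso: "alg_iso (param_mult 1 b11 h 0 b22 0 0 0 0 1)
    (param_mult 1 0 ((b11 * p * r + h * p * t + 0 * q * r + b22 * q * t) / (\<rho> * \<rho>))
       ((b11 * r * p + h * r * q + 0 * t * p + b22 * t * q) / (\<rho> * \<rho>)) 0 0 0 0 0 1)"
    by (rule param_mult_iso_GL[where p=p and q=q and r=r and t=t and \<sigma>="-\<rho>" and \<mu>="\<rho> * \<rho>"])
      (use \<rho>0 False in \<open>simp_all add: p_def q_def r_def t_def b22 field_simps\<close>)
  have sum: "(b11 * p * r + h * p * t + 0 * q * r + b22 * q * t) / (\<rho> * \<rho>)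
      + (b11 * r * p + h * r * q + 0 * t * p + b22 * t * q) / (\<rho> * \<rho>) = 1 + 0"
    using \<rho>0 False unfolding p_def q_def r_def t_def b22 by (simp add: field_simps)
  show ?thesis by (rule listed_alg_iso[OF iso listed_shift[OF _ sum listed_M08]]) simp
qed

lemma listed_M07_M09: "listed (param_mult 1 b11 b12 b21 b22 0 0 0 0 1)"
proof -
  have upper: "listed (param_mult 1 b11 h 0 b22 0 0 0 0 1)" for h
  proof -
    consider "h * h - 4 * b11 * b22 \<noteq> 0" | "b11 = 0 \<and> h = 0 \<and> b22 = 0"
      | "h * h - 4 * b11 * b22 = 0 \<and> b11 \<noteq> 0" | "b11 = 0 \<and> h = 0 \<and> b22 \<noteq> 0"
      by fastforce
    then show ?thesis
    proof cases
      case 1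
      then show ?thesis by (rule listed_M08_nondegenerate)
    next
      case 2
      then show ?thesis using listed_M07 by simp
    next
      case 3
      then have b11: "b11 \<noteq> 0" and disc: "h * h = 4 * b11 * b22" by auto
      obtain k where k: "k * k = b11" using complex_square_root_exists by blast
      have k0: "k \<noteq> 0" using k b11 by auto
      have b22: "b22 = h * h / (4 * k * k)" using disc k b11 by (simp add: field_simps)
      have iso: "alg_iso (param_mult 1 b11 h 0 b22 0 0 0 0 1)
        (param_mult 1 1 (h * k / (2 * b11)) (- h * k / (2 * b11)) 0 0 0 0 0 1)"
        by (rule param_mult_iso_GL[where p=1 and q=0 and r="-h / (2 * k)" and t=k and \<sigma>=k and \<mu>="k * k"])
          (use k0 in \<open>simp_all add: b22 k[symmetric] field_simps\<close>)
      have sum: "h * k / (2 * b11) + (- h * k / (2 * b11)) = 0 + 0" by (simp add: field_simps)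
      show ?thesis by (rule listed_alg_iso[OF iso listed_shift[OF _ sum listed_M09]]) simp
    next
      case 4
      then have b11: "b11 = 0" and h: "h = 0" and b22: "b22 \<noteq> 0" by auto
      obtain k where k: "k * k = b22" using complex_square_root_exists by blast
      have k0: "k \<noteq> 0" using k b22 by auto
      have "alg_iso (param_mult 1 b11 h 0 b22 0 0 0 0 1) (param_mult 1 1 0 0 0 0 0 0 0 1)"
        by (rule param_mult_iso_GL[where p=0 and q=1 and r=k and t=0 and \<sigma>="-k" and \<mu>="k * k"])
          (use k0 in \<open>simp_all add: b11 h k[symmetric] field_simps\<close>)
      then show ?thesis using listed_M09 listed_alg_iso by blast
    qed
  qed
  show ?thesis by (rule listed_shift[OF _ _ upper[of "b12 + b21"]]) simp_all
qed

lemma listed_M10_M12: "listed (param_mult 1 b11 b12 b21 b22 1 0 (-1) 0 1)"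
proof -
  have upper: "listed (param_mult 1 b11 h 0 b22 1 0 (-1) 0 1)" for h
  proof -
    consider "b22 \<noteq> 0" | "b22 = 0 \<and> h \<noteq> 0" | "b22 = 0 \<and> h = 0" by blast
    then show ?thesis
    proof cases
      case 1
      obtain k where k: "k * k = b22" using complex_square_root_exists by blast
      have k0: "k \<noteq> 0" using k 1 by auto
      have iso: "alg_iso (param_mult 1 b11 h 0 b22 1 0 (-1) 0 1)
        (param_mult 1 (b11 - h * h / (4 * k * k)) (h / (2 * k)) (- h / (2 * k)) 1 1 0 (-1) 0 1)"
        by (rule param_mult_iso_GL[where p=k and q="-h / (2 * k)" and r=0 and t=1 and \<sigma>=k and \<mu>="k * k"])
          (use k0 in \<open>simp_all add: k[symmetric] field_simps\<close>)
      have sum: "h / (2 * k) + (- h / (2 * k)) = 0 + 0" by (simp add: field_simps)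
      show ?thesis by (rule listed_alg_iso[OF iso listed_shift[OF _ sum listed_M12]]) simp
    next
      case 2
      then have b22: "b22 = 0" and h0: "h \<noteq> 0" by auto
      have "alg_iso (param_mult 1 b11 h 0 b22 1 0 (-1) 0 1) (param_mult 1 0 1 0 0 1 0 (-1) 0 1)"
        by (rule param_mult_iso_GL[where p=h and q="-b11" and r=0 and t=1 and \<sigma>=h and \<mu>="h * h"])
          (use h0 in \<open>simp_all add: b22 field_simps\<close>)
      then show ?thesis using listed_M11 listed_alg_iso by blast
    next
      case 3
      then show ?thesis using listed_M10 by simp
    qed
  qed
  show ?thesis by (rule listed_shift[OF _ _ upper[of "b12 + b21"]]) simp_all
qed

lemma listed_antisymmetric_e3e3_1: "listed (param_mult 1 b11 b12 b21 b22 k1 k2 (-k1) (-k2) 1)"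
proof -
  consider "k1 \<noteq> 0" | "k1 = 0 \<and> k2 \<noteq> 0" | "k1 = 0 \<and> k2 = 0" by blast
  then show ?thesis
  proof cases
    case 1
    show ?thesis
      by (rule listed_alg_iso[OF param_mult_iso_GL_transform[where p=1 and q=0 and r="-k2" and t=k1
            and \<sigma>=k1 and \<mu>="k1 * k1" and w'=1 and c1'=1 and c2'=0 and d1'="-1" and d2'=0 and g'=1]
            listed_M10_M12])
        (use 1 in \<open>simp_all add: field_simps\<close>)
  next
    case 2
    show ?thesis
      by (rule listed_alg_iso[OF param_mult_iso_GL_transform[where p=0 and q=1 and r="-k2" and t=0
            and \<sigma>=k2 and \<mu>="k2 * k2" and w'=1 and c1'=1 and c2'=0 and d1'="-1" and d2'=0 and g'=1]
            listed_M10_M12])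
        (use 2 in \<open>simp_all add: field_simps\<close>)
  next
    case 3
    then show ?thesis using listed_M07_M09 by simp
  qed
qed

text \<open>Completing the square (\<open>e\<^sub>i' = e\<^sub>i - (c\<^sub>i + d\<^sub>i)/(2g) e\<^sub>3\<close>) makes \<open>d = -c\<close>.\<close>

lemma listed_e3e3_nonzero:
  assumes "g \<noteq> 0"
  shows "listed (param_mult 1 b11 b12 b21 b22 c1 c2 d1 d2 g)"
  apply (rule listed_alg_iso[OF param_mult_iso_unipotent_transform[where pa="-(c1 + d1) / (2 * g)"
        and pb="-(c2 + d2) / (2 * g)" and l=0]])
  apply (rule listed_alg_iso[OF param_mult_iso_GL_transform[where p=1 and q=0 and r=0 and t=1 and \<sigma>=1
        and \<mu>=g and w'=1 and c1'="(c1 - d1) / (2 * g)" and c2'="(c2 - d2) / (2 * g)"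
        and d1'="-((c1 - d1) / (2 * g))" and d2'="-((c2 - d2) / (2 * g))" and g'=1]
        listed_antisymmetric_e3e3_1])
  using assms by (simp_all add: field_simps)

subsection \<open>The case \<open>e\<^sub>3e\<^sub>3 = 0\<close>\<close>

lemma listed_M05_M06: "listed (param_mult 1 b11 b12 b21 b22 0 1 1 (-1) 0)"
proof -
  have "listed (param_mult 1 0 0 0 b22 0 1 1 (-1) 0)"
  proof (cases "b22 = 0")
    case True
    then show ?thesis using listed_M05 by simp
  next
    case False
    have "alg_iso (param_mult 1 0 0 0 b22 0 1 1 (-1) 0) (param_mult 1 0 0 0 1 0 1 1 (-1) 0)"
      by (rule param_mult_iso_GL[where p=b22 and q=0 and r=0 and t=b22 and \<sigma>="b22 * b22"
            and \<mu>="b22 * b22 * b22"])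
        (use False in \<open>simp_all add: field_simps\<close>)
    then show ?thesis using listed_M06 listed_alg_iso by blast
  qed
  moreover have "alg_iso (param_mult 1 b11 b12 b21 b22 0 1 1 (-1) 0) (param_mult 1 0 0 0 b22 0 1 1 (-1) 0)"
    by (rule param_mult_iso_unipotent[where pa="-b11" and pb="-(b12 + b21)" and l="b12 + b11"])
      (simp_all add: algebra_simps)
  ultimately show ?thesis using listed_alg_iso by blast
qed

lemma listed_det_nonzero:
  assumes "c1 * d2 - c2 * d1 \<noteq> 0"
  shows "listed (param_mult 1 b11 b12 b21 b22 c1 c2 d1 d2 0)"
proof -
  define D where "D = c1 * d2 - c2 * d1"
  have D0: "D \<noteq> 0" using assms D_def by simp
  have det: "(-c2 / D) * (-(c1 + d1) / D) - (c1 / D) * ((c2 + d2) / D) = -1 / D"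
    using D0 by (simp add: field_simps) (simp add: D_def algebra_simps)
  show ?thesis
    apply (rule listed_alg_iso[OF param_mult_iso_GL_transform[where p="-c2 / D" and q="c1 / D"
          and r="(c2 + d2) / D" and t="-(c1 + d1) / D" and \<sigma>="-1 / D" and \<mu>="-1 / D"
          and w'=1 and c1'=0 and c2'=1 and d1'=1 and d2'="-1" and g'=0] listed_M05_M06])
    unfolding det using D0 by (simp_all add: field_simps) (simp_all add: D_def algebra_simps)
qed

lemma listed_M03_M04: "listed (param_mult 1 b11 b12 b21 b22 \<alpha> 0 (1 - \<alpha>) 0 0)"
proof -
  have "listed (param_mult 1 0 0 0 b22 \<alpha> 0 (1 - \<alpha>) 0 0)"
  proof (cases "b22 = 0")
    case True
    then show ?thesis using listed_M03 by simp
  next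
    case False
    have "alg_iso (param_mult 1 0 0 0 b22 \<alpha> 0 (1 - \<alpha>) 0 0) (param_mult 1 0 0 0 1 \<alpha> 0 (1 - \<alpha>) 0 0)"
      by (rule param_mult_iso_GL[where p=1 and q=0 and r=0 and t="1 / b22" and \<sigma>="1 / b22" and \<mu>="1 / b22"])
        (use False in \<open>simp_all add: field_simps\<close>)
    then show ?thesis using listed_M04 listed_alg_iso by blast
  qed
  moreover have "alg_iso (param_mult 1 b11 b12 b21 b22 \<alpha> 0 (1 - \<alpha>) 0 0) (param_mult 1 0 0 0 b22 \<alpha> 0 (1 - \<alpha>) 0 0)"
    by (rule param_mult_iso_unipotent[where pa="-b11" and pb="-(b12 + b21)" and l="b12 - \<alpha> * (b12 + b21)"])
      (simp_all add: algebra_simps)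
  ultimately show ?thesis using listed_alg_iso by blast
qed

lemma listed_det_zero:
  assumes det: "c1 * d2 - c2 * d1 = 0" and ne: "c1 + d1 \<noteq> 0 \<or> c2 + d2 \<noteq> 0"
  shows "listed (param_mult 1 b11 b12 b21 b22 c1 c2 d1 d2 0)"
proof (cases "c1 + d1 = 0")
  case False
  show ?thesis
    apply (rule listed_alg_iso[OF param_mult_iso_GL_transform[where p="1 / (c1 + d1)" and q=0
          and r="-(c2 + d2)" and t="c1 + d1" and \<sigma>=1 and \<mu>=1 and w'=1 and c1'="c1 / (c1 + d1)"
          and c2'=0 and d1'="1 - c1 / (c1 + d1)" and d2'=0 and g'=0] listed_M03_M04])
    using False det by (simp_all add: field_simps)
next
  case True
  then have c2d2: "c2 + d2 \<noteq> 0" using ne by auto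
  have d1: "d1 = -c1" using True by algebra
  have "c1 * (c2 + d2) = 0" using det unfolding d1 by (simp add: algebra_simps)
  then have c1: "c1 = 0" using c2d2 by simp
  show ?thesis
    apply (rule listed_alg_iso[OF param_mult_iso_GL_transform[where p=0 and q="1 / (c2 + d2)" and r="-1"
          and t=0 and \<sigma>="1 / (c2 + d2)" and \<mu>="1 / (c2 + d2)" and w'=1 and c1'="c2 / (c2 + d2)"
          and c2'=0 and d1'="1 - c2 / (c2 + d2)" and d2'=0 and g'=0] listed_M03_M04])
    using c2d2 unfolding d1 c1 by (simp_all add: field_simps)
qed

lemma listed_L10_L11:
  assumes "b22 \<noteq> 0"
  shows "listed (param_mult 1 b11 h 0 b22 1 0 (-1) 0 0)"
proof (cases "4 * b11 * b22 - h * h = 0")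
  case True
  then have b11: "b11 = h * h / (4 * b22)" using assms by (simp add: field_simps)
  have iso: "alg_iso (param_mult 1 b11 h 0 b22 1 0 (-1) 0 0) (param_mult 1 0 (h / 2) (- h / 2) 1 1 0 (-1) 0 0)"
    by (rule param_mult_iso_GL[where p=1 and q="-h / (2 * b22)" and r=0 and t="1 / b22"
          and \<sigma>="1 / b22" and \<mu>="1 / b22"])
      (use assms in \<open>simp_all add: b11 field_simps\<close>)
  have sum: "h / 2 + (- h / 2) = 0 + 0" by simp
  show ?thesis by (rule listed_alg_iso[OF iso listed_shift[OF _ sum listed_L10]]) simp
next
  case False
  obtain k where k: "k * k = (4 * b11 * b22 - h * h) / 4" using complex_square_root_exists by blast
  have k0: "k \<noteq> 0" using k False by auto
  have b11: "b11 = (4 * k * k + h * h) / (4 * b22)" using k assms by (simp add: field_simps)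
  have iso: "alg_iso (param_mult 1 b11 h 0 b22 1 0 (-1) 0 0)
    (param_mult 1 1 (h / (2 * k)) (- h / (2 * k)) 1 1 0 (-1) 0 0)"
    by (rule param_mult_iso_GL[where p=k and q="-k * h / (2 * b22)" and r=0 and t="k * k / b22"
          and \<sigma>="k * k * k / b22" and \<mu>="k * k * k * k / b22"])
      (use assms k0 in \<open>simp_all add: b11 field_simps\<close>)
  have sum: "h / (2 * k) + (- h / (2 * k)) = 0 + 0" by simp
  show ?thesis by (rule listed_alg_iso[OF iso listed_shift[OF _ sum listed_L11]]) simp
qed

lemma listed_L01_L12: "listed (param_mult 1 b11 b12 b21 b22 1 0 (-1) 0 0)"
proof -
  have upper: "listed (param_mult 1 b11 h 0 b22 1 0 (-1) 0 0)" for h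
  proof -
    consider "b22 \<noteq> 0" | "b22 = 0 \<and> h \<noteq> 0" | "b22 = 0 \<and> h = 0 \<and> b11 = 0" | "b22 = 0 \<and> h = 0 \<and> b11 \<noteq> 0"
      by blast
    then show ?thesis
    proof cases
      case 1
      then show ?thesis by (rule listed_L10_L11)
    next
      case 2
      then have b22: "b22 = 0" and h0: "h \<noteq> 0" by auto
      have "alg_iso (param_mult 1 b11 h 0 b22 1 0 (-1) 0 0) (param_mult 1 0 1 0 0 1 0 (-1) 0 0)"
        by (rule param_mult_iso_GL[where p=h and q="-b11" and r=0 and t=1 and \<sigma>=h and \<mu>="h * h"])
          (use h0 in \<open>simp_all add: b22 field_simps\<close>)
      then show ?thesis using listed_L09 listed_alg_iso by blast
    next
      case 3
      then show ?thesis using listed_L01 by simp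
    next
      case 4
      then have b22: "b22 = 0" and h: "h = 0" and b11: "b11 \<noteq> 0" by auto
      have "alg_iso (param_mult 1 b11 h 0 b22 1 0 (-1) 0 0) (param_mult 1 1 0 0 0 1 0 (-1) 0 0)"
        by (rule param_mult_iso_GL[where p=1 and q=0 and r=0 and t=b11 and \<sigma>=b11 and \<mu>=b11])
          (use b11 in \<open>simp_all add: b22 h field_simps\<close>)
      then show ?thesis using listed_L12 listed_alg_iso by blast
    qed
  qed
  show ?thesis by (rule listed_shift[OF _ _ upper[of "b12 + b21"]]) simp_all
qed

lemma listed_antisymmetric_e3e3_0:
  assumes "k1 \<noteq> 0 \<or> k2 \<noteq> 0"
  shows "listed (param_mult 1 b11 b12 b21 b22 k1 k2 (-k1) (-k2) 0)"
proof (cases "k1 = 0")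
  case False
  show ?thesis
    apply (rule listed_alg_iso[OF param_mult_iso_GL_transform[where p="1 / k1" and q=0 and r="-k2" and t=k1
          and \<sigma>=1 and \<mu>=1 and w'=1 and c1'=1 and c2'=0 and d1'="-1" and d2'=0 and g'=0] listed_L01_L12])
    using False by (simp_all add: field_simps)
next
  case True
  then have k2: "k2 \<noteq> 0" using assms by auto
  show ?thesis
    apply (rule listed_alg_iso[OF param_mult_iso_GL_transform[where p=0 and q="1 / k2" and r="-1" and t=0
          and \<sigma>="1 / k2" and \<mu>="1 / k2" and w'=1 and c1'=1 and c2'=0 and d1'="-1" and d2'=0 and g'=0]
          listed_L01_L12])
    using k2 unfolding True by (simp_all add: field_simps)
qed

lemma listed_e3e3_zero:
  assumes "\<not> (c1 = 0 \<and> c2 = 0 \<and> d1 = 0 \<and> d2 = 0)"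
  shows "listed (param_mult 1 b11 b12 b21 b22 c1 c2 d1 d2 0)"
proof -
  consider "c1 * d2 - c2 * d1 \<noteq> 0" | "c1 * d2 - c2 * d1 = 0 \<and> (c1 + d1 \<noteq> 0 \<or> c2 + d2 \<noteq> 0)"
    | "c1 + d1 = 0 \<and> c2 + d2 = 0" by blast
  then show ?thesis
  proof cases
    case 1
    then show ?thesis by (rule listed_det_nonzero)
  next
    case 2
    then show ?thesis using listed_det_zero by blast
  next
    case 3
    then have d1: "d1 = -c1" and d2: "d2 = -c2" by algebra+
    have "c1 \<noteq> 0 \<or> c2 \<noteq> 0" using assms d1 d2 by auto
    then show ?thesis unfolding d1 d2 by (rule listed_antisymmetric_e3e3_0)
  qed
qed

lemma listed_param_mult:
  assumes "w \<noteq> 0" and "\<not> (c1 = 0 \<and> c2 = 0 \<and> d1 = 0 \<and> d2 = 0 \<and> g = 0)"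
  shows "listed (param_mult w b11 b12 b21 b22 c1 c2 d1 d2 g)"
proof -
  have iso: "alg_iso (param_mult w b11 b12 b21 b22 c1 c2 d1 d2 g)
    (param_mult 1 b11 b12 b21 b22 (w * c1) (w * c2) (w * d1) (w * d2) (w * w * g))"
    by (rule param_mult_iso_GL[where p=1 and q=0 and r=0 and t=1 and \<sigma>=w and \<mu>=1])
      (use assms(1) in \<open>simp_all add: field_simps\<close>)
  show ?thesis
  proof (cases "g = 0")
    case False
    then have "w * w * g \<noteq> 0" using assms(1) by simp
    then show ?thesis by (rule listed_alg_iso[OF iso listed_e3e3_nonzero])
  next
    case True
    then have "\<not> (w * c1 = 0 \<and> w * c2 = 0 \<and> w * d1 = 0 \<and> w * d2 = 0)" using assms by simp
    then have "listed (param_mult 1 b11 b12 b21 b22 (w * c1) (w * c2) (w * d1) (w * d2) 0)"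
      by (rule listed_e3e3_zero)
    then show ?thesis using listed_alg_iso[OF iso] True by simp
  qed
qed

theorem theoremC:
  fixes m :: "V4 \<Rightarrow> V4 \<Rightarrow> V4"
  assumes "cbilinear m" and "nilpotent_alg m" and "nil_index3 m"
  shows "two_step_nilpotent m \<or>
    alg_iso m L01 \<or> alg_iso m L09 \<or> alg_iso m L10 \<or> alg_iso m L11 \<or> alg_iso m L12 \<or>
    (\<exists>\<alpha>. alg_iso m (M03 \<alpha>)) \<or> (\<exists>\<alpha>. alg_iso m (M04 \<alpha>)) \<or>
    alg_iso m M05 \<or> alg_iso m M06 \<or> alg_iso m M07 \<or> alg_iso m M08 \<or> alg_iso m M09 \<or>
    (\<exists>\<alpha>. alg_iso m (M10 \<alpha>)) \<or> alg_iso m M11 \<or> (\<exists>\<alpha>. alg_iso m (M12 \<alpha>))"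
proof (cases "two_step_nilpotent m")
  case True
  then show ?thesis by simp
next
  case False
  obtain w b11 b12 b21 b22 c1 c2 d1 d2 g
    where "w \<noteq> 0" and "\<not> (c1 = 0 \<and> c2 = 0 \<and> d1 = 0 \<and> d2 = 0 \<and> g = 0)"
      and iso: "alg_iso m (param_mult w b11 b12 b21 b22 c1 c2 d1 d2 g)"
    by (rule alg_iso_param_mult_exists[OF assms False])
  then have "listed m" by (intro listed_alg_iso[OF iso listed_param_mult])
  then show ?thesis unfolding listed_def by blast
qed

end
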